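(* Let $n\in\mathbb{N}$ and $r\in\mathbb{F}_2((x^{-1}))$ with $0\le\deg(r)<2^n$. Then $[r]=[P^{2^n}(r)]$.
   Context: $\mathbb{F}_2((x^{-1}))$ is the field of formal series $\sum_{z\in\mathbb{Z}}a_zx^z$, $a_z\in\mathbb{F}_2$, with $a_z\ne0$ for only finitely many positive $z$; $\deg$ is the largest exponent with nonzero coefficient. The polynomial part is $[\sum a_zx^z]=\sum_{z\ge0}a_zx^z$. $P(r)=\frac{x}{x+1}r$ with $\frac{x}{x+1}=\sum_{k\ge0}x^{-k}$. *)

theory Defs
  imports "HOL-Library.Z2" "HOL-Computational_Algebra.Formal_Laurent_Series"
begin

text \<open>F_2((x^{-1})) is modelled as bit fls, formal Laurent series in the variable
  t = x^{-1} over F_2 (type bit).  The coefficient of x^z of r is fls_nth r (-z).\<close>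

type_synonym f2laurent = "bit fls"

definition xvar :: f2laurent where "xvar = fls_X_inv"

definition coeffx :: "f2laurent \<Rightarrow> int \<Rightarrow> bit" where
  "coeffx r z = fls_nth r (- z)"

text \<open>degree in x: largest exponent of x with nonzero coefficient (for r \<noteq> 0)\<close>
definition degx :: "f2laurent \<Rightarrow> int" where
  "degx r = - fls_subdegree r"

definition polypart :: "f2laurent \<Rightarrow> f2laurent" where
  "polypart r = Abs_fls (\<lambda>k. if k \<le> 0 then fls_nth r k else 0)"

definition Pmap :: "f2laurent \<Rightarrow> f2laurent" where
  "Pmap r = (xvar / (xvar + 1)) * r"

end

theory Submission
  imports Defs
begin

text \<open>Over F_2 we have P(r) = r / (1 + x^-1), and squaring is additive, so
  P^(2^n)(r) = r / (1 + x^-(2^n)) = r + r x^-(2^n) / (1 + x^-(2^n)).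
  The correction term has degree deg r - 2^n < 0, so it does not touch the polynomial part.\<close>

lemma two_eq_zero_bit_fls: "(2 :: bit fls) = 0"
  by (metis fls_const_numeral bit_2_eq_0 fls_const_0)

lemma power_two_power_add_char_two:
  fixes a b :: "'a::comm_ring_1"
  assumes "(2::'a) = 0"
  shows "(a + b) ^ (2 ^ n) = a ^ (2 ^ n) + b ^ (2 ^ n)"
proof (induction n)
  case 0
  then show ?case by simp
next
  case (Suc n)
  have square: "c ^ (2 ^ Suc n) = (c ^ (2 ^ n))^2" for c :: 'a
    by (simp add: power_mult[symmetric] mult.commute)
  show ?case
    unfolding square Suc using assms by (simp add: power2_sum)
qed

lemma divide_one_plus_char_two:
  fixes r u :: "'a::field"
  assumes "(2::'a) = 0" and "1 + u \<noteq> 0"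
  shows "r / (1 + u) = r + r * u / (1 + u)"
proof -
  have "r + r * u / (1 + u) = (r + 2 * (r * u)) / (1 + u)"
    using assms(2) by (simp add: field_simps)
  then show ?thesis
    using assms(1) by simp
qed

lemma Pmap_eq_divide: "Pmap r = r / (1 + fls_X)"
proof -
  have "xvar + 1 = xvar * (1 + fls_X)"
    by (simp add: xvar_def algebra_simps fls_X_inv_times_conv_shift)
  then show ?thesis
    by (simp add: Pmap_def xvar_def)
qed

lemma Pmap_iterate: "(Pmap ^^ m) r = r / (1 + fls_X) ^ m"
  by (induction m) (simp_all add: Pmap_eq_divide field_simps)

lemma Pmap_iterate_two_power: "(Pmap ^^ (2 ^ n)) r = r / (1 + fls_X ^ (2 ^ n))"
  by (simp add: Pmap_iterate power_two_power_add_char_two two_eq_zero_bit_fls)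

lemma fls_subdegree_one_plus_X_power:
  assumes "m > 0"
  shows "fls_subdegree (1 + fls_X ^ m :: 'a::ring_1 fls) = 0"
  using assms by (intro fls_subdegree_eqI) auto

lemma polypart_add_subdegree_pos:
  assumes "0 < fls_subdegree s"
  shows "polypart (r + s) = polypart r"
proof -
  have "fls_nth s k = 0" if "k \<le> 0" for k
    using assms that by (simp add: fls_eq0_below_subdegree)
  then show ?thesis
    unfolding polypart_def by (metis fls_plus_nth add_0_right)
qed

theorem lemma3p1:
  fixes n :: nat and r :: f2laurent
  assumes "r \<noteq> 0" and "0 \<le> degx r" and "degx r < 2 ^ n"
  shows "polypart r = polypart ((Pmap ^^ (2 ^ n)) r)"
proof -
  define u :: f2laurent where "u = fls_X ^ (2 ^ n)"
  have "1 + u \<noteq> 0"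
    by (rule fls_nonzeroI[of _ 0]) (simp add: u_def)
  have subdegree_denom: "fls_subdegree (1 + u) = 0"
    by (simp add: u_def fls_subdegree_one_plus_X_power)
  have "(Pmap ^^ (2 ^ n)) r = r + r * u / (1 + u)"
    unfolding Pmap_iterate_two_power u_def[symmetric]
    using two_eq_zero_bit_fls \<open>1 + u \<noteq> 0\<close> by (rule divide_one_plus_char_two)
  moreover have "0 < fls_subdegree (r * u / (1 + u))"
    using assms(1,3) \<open>1 + u \<noteq> 0\<close> subdegree_denom
    by (simp add: fls_divide_subdegree u_def degx_def)
  ultimately show ?thesis
    by (simp add: polypart_add_subdegree_pos)
qed

end
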